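(* Let $\mathbf{T}=(T_1,\dots,T_m)$ and $\mathbf{T}^0=(T^0_1,\dots,T^0_m)$ be real random vectors and $\mathcal{H}_0\subset[m]$ such that for every $i\in\mathcal{H}_0$, $(T_i,T_i^0\mid\mathbf{T}_{-i},\mathbf{T}^0_{-i})\stackrel{d}{=}(T_i^0,T_i\mid\mathbf{T}_{-i},\mathbf{T}^0_{-i})$. Let $g(\cdot;\mathbf{T},\mathbf{T}^0)$ be a (data-dependent) score function and define $U_i=g(T_i;\mathbf{T},\mathbf{T}^0)$, $U_i^0=g(T_i^0;\mathbf{T},\mathbf{T}^0)$, $i\in[m]$. For $\mathcal{J}\subset[m]$ let $(\mathbf{T},\mathbf{T}^0)_{\mathrm{swap}(\mathcal{J})}$ denote the pair of vectors obtained by swapping $T_i$ and $T_i^0$ for each $i\in\mathcal{J}$. If $g(\cdot;(\mathbf{T},\mathbf{T}^0)_{\mathrm{swap}(\mathcal{J})})=g(\cdot;(\mathbf{T},\mathbf{T}^0))$ for all $\mathcal{J}\subset[m]$, then for every $i\in\mathcal{H}_0$, $$(U_i,U_i^0\mid\mathbf{U}_{-i},\mathbf{U}^0_{-i})\stackrel{d}{=}(U_i^0,U_i\mid\mathbf{U}_{-i},\mathbf{U}^0_{-i}),$$ where $\mathbf{U}_{-i}=(U_k:k\ne i)$, $\mathbf{U}^0_{-i}=(U^0_k:k\ne i)$.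
   Context: For a vector $\mathbf{a}=(a_1,\dots,a_m)$, $\mathbf{a}_{-i}$ denotes the vector with the $i$-th entry removed. *)

theory Defs
  imports "HOL-Probability.Probability"
begin

definition vec_space :: "nat \<Rightarrow> (nat \<Rightarrow> real) measure" where
  "vec_space m = PiM {1..m} (\<lambda>_. borel)"

definition pair_vec_space :: "nat \<Rightarrow> ((nat \<Rightarrow> real) \<times> (nat \<Rightarrow> real)) measure" where
  "pair_vec_space m = vec_space m \<Otimes>\<^sub>M vec_space m"

definition swap_coords ::
  "nat set \<Rightarrow> (nat \<Rightarrow> real) \<times> (nat \<Rightarrow> real) \<Rightarrow> (nat \<Rightarrow> real) \<times> (nat \<Rightarrow> real)" where
  "swap_coords J p =
     (\<lambda>k. if k \<in> J then snd p k else fst p k, \<lambda>k. if k \<in> J then fst p k else snd p k)"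

text \<open>(X_i, X0_i | X_{-i}, X0_{-i}) =d (X0_i, X_i | X_{-i}, X0_{-i}):
  equality of conditional laws given the remaining coordinates is equality of the
  joint laws of (X,X0) and of (X,X0) with coordinate i swapped.\<close>
definition cond_exch ::
  "'a measure \<Rightarrow> nat \<Rightarrow> ('a \<Rightarrow> nat \<Rightarrow> real) \<Rightarrow> ('a \<Rightarrow> nat \<Rightarrow> real) \<Rightarrow> nat \<Rightarrow> bool" where
  "cond_exch M m X X0 i \<longleftrightarrow>
     distr M (pair_vec_space m) (\<lambda>\<omega>. swap_coords {i} (X \<omega>, X0 \<omega>))
   = distr M (pair_vec_space m) (\<lambda>\<omega>. (X \<omega>, X0 \<omega>))"

end

theory Submission
  imports Defs
begin

text \<open>(U, U0) is the image of (T, T0) under the map p \<mapsto> ((g (fst p k) p)_k, (g (snd p k) p)_k).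
  Since g is invariant under swapping coordinates of its data argument, this map commutes with
  the swap of coordinate i, so it carries the swap-invariance of the law of (T, T0) over to
  the law of (U, U0).\<close>

definition score_map ::
  "nat \<Rightarrow> (real \<Rightarrow> (nat \<Rightarrow> real) \<times> (nat \<Rightarrow> real) \<Rightarrow> real)
   \<Rightarrow> (nat \<Rightarrow> real) \<times> (nat \<Rightarrow> real) \<Rightarrow> (nat \<Rightarrow> real) \<times> (nat \<Rightarrow> real)" where
  "score_map m g p = (restrict (\<lambda>k. g (fst p k) p) {1..m}, restrict (\<lambda>k. g (snd p k) p) {1..m})"

lemma measurable_pair_vec_space_coord:
  assumes "k \<in> {1..m}"
  shows "(\<lambda>p. fst p k) \<in> pair_vec_space m \<rightarrow>\<^sub>M borel"
    and "(\<lambda>p. snd p k) \<in> pair_vec_space m \<rightarrow>\<^sub>M borel"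
  using assms unfolding pair_vec_space_def vec_space_def by auto

lemma measurable_pair_vec_space_Pair:
  assumes "X \<in> M \<rightarrow>\<^sub>M vec_space m" and "X0 \<in> M \<rightarrow>\<^sub>M vec_space m"
  shows "(\<lambda>\<omega>. (X \<omega>, X0 \<omega>)) \<in> M \<rightarrow>\<^sub>M pair_vec_space m"
  unfolding pair_vec_space_def using assms by (rule measurable_Pair)

lemma measurable_vec_space_restrict:
  assumes "\<And>k. k \<in> {1..m} \<Longrightarrow> (\<lambda>x. f x k) \<in> M \<rightarrow>\<^sub>M borel"
  shows "(\<lambda>x. restrict (f x) {1..m}) \<in> M \<rightarrow>\<^sub>M vec_space m"
  unfolding vec_space_def using assms by (rule measurable_restrict)

lemma measurable_swap_coords:
  "swap_coords J \<in> pair_vec_space m \<rightarrow>\<^sub>M pair_vec_space m"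
proof -
  have "(\<lambda>p k. if k \<in> J then h' p k else h p k) \<in> pair_vec_space m \<rightarrow>\<^sub>M vec_space m"
    if swap: "h = fst \<and> h' = snd \<or> h = snd \<and> h' = fst" for h h' :: "_ \<Rightarrow> nat \<Rightarrow> real"
    unfolding vec_space_def
  proof (rule measurable_PiM_single')
    show "(\<lambda>p. if k \<in> J then h' p k else h p k) \<in> pair_vec_space m \<rightarrow>\<^sub>M borel"
      if "k \<in> {1..m}" for k
      using swap measurable_pair_vec_space_coord[OF that] by (cases "k \<in> J") auto
    show "(\<lambda>p k. if k \<in> J then h' p k else h p k)
        \<in> space (pair_vec_space m) \<rightarrow> (\<Pi>\<^sub>E k\<in>{1..m}. space borel)"
      using swap
      by (auto simp: pair_vec_space_def vec_space_def space_pair_measure space_PiM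
          PiE_def extensional_def)
  qed
  then show ?thesis
    unfolding swap_coords_def by (simp add: measurable_pair_vec_space_Pair)
qed

lemma measurable_score_map:
  assumes "(\<lambda>(x, p). g x p) \<in> borel \<Otimes>\<^sub>M pair_vec_space m \<rightarrow>\<^sub>M borel"
  shows "score_map m g \<in> pair_vec_space m \<rightarrow>\<^sub>M pair_vec_space m"
proof -
  have "(\<lambda>p. g (h p k) p) \<in> pair_vec_space m \<rightarrow>\<^sub>M borel"
    if "h = fst \<or> h = snd" and "k \<in> {1..m}" for h k
  proof -
    have "(\<lambda>p. (h p k, p)) \<in> pair_vec_space m \<rightarrow>\<^sub>M borel \<Otimes>\<^sub>M pair_vec_space m"
      using that by (auto intro!: measurable_Pair measurable_pair_vec_space_coord)
    from measurable_comp[OF this assms] show ?thesis by (simp add: o_def)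
  qed
  then show ?thesis
    unfolding score_map_def
    by (intro measurable_pair_vec_space_Pair measurable_vec_space_restrict) auto
qed

lemma score_map_swap_coords:
  assumes "\<And>x. g x (swap_coords J p) = g x p"
  shows "score_map m g (swap_coords J p) = swap_coords J (score_map m g p)"
  unfolding score_map_def assms by (auto simp: swap_coords_def)

lemma cond_exch_image:
  assumes exch: "cond_exch M m X X0 i"
    and meas: "(\<lambda>\<omega>. (X \<omega>, X0 \<omega>)) \<in> M \<rightarrow>\<^sub>M pair_vec_space m"
    and \<Phi>: "\<Phi> \<in> pair_vec_space m \<rightarrow>\<^sub>M pair_vec_space m"
    and commute: "\<And>\<omega>. \<omega> \<in> space M \<Longrightarrow>
      \<Phi> (swap_coords {i} (X \<omega>, X0 \<omega>)) = swap_coords {i} (\<Phi> (X \<omega>, X0 \<omega>))"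
  shows "cond_exch M m (\<lambda>\<omega>. fst (\<Phi> (X \<omega>, X0 \<omega>))) (\<lambda>\<omega>. snd (\<Phi> (X \<omega>, X0 \<omega>))) i"
proof -
  have swap_meas: "(\<lambda>\<omega>. swap_coords {i} (X \<omega>, X0 \<omega>)) \<in> M \<rightarrow>\<^sub>M pair_vec_space m"
    using measurable_comp[OF meas measurable_swap_coords] by (simp add: o_def)
  have "distr M (pair_vec_space m) (\<lambda>\<omega>. swap_coords {i} (\<Phi> (X \<omega>, X0 \<omega>)))
      = distr M (pair_vec_space m) (\<lambda>\<omega>. \<Phi> (swap_coords {i} (X \<omega>, X0 \<omega>)))"
    using commute by (intro distr_cong) auto
  also have "\<dots> = distr (distr M (pair_vec_space m) (\<lambda>\<omega>. swap_coords {i} (X \<omega>, X0 \<omega>)))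
      (pair_vec_space m) \<Phi>"
    using distr_distr[OF \<Phi> swap_meas] by (simp add: o_def)
  also have "\<dots> = distr (distr M (pair_vec_space m) (\<lambda>\<omega>. (X \<omega>, X0 \<omega>))) (pair_vec_space m) \<Phi>"
    using exch unfolding cond_exch_def by simp
  also have "\<dots> = distr M (pair_vec_space m) (\<lambda>\<omega>. \<Phi> (X \<omega>, X0 \<omega>))"
    using distr_distr[OF \<Phi> meas] by (simp add: o_def)
  finally show ?thesis
    unfolding cond_exch_def by simp
qed

theorem proposition1:
  fixes M :: "'a measure" and m :: nat and H0 :: "nat set"
    and T T0 :: "'a \<Rightarrow> nat \<Rightarrow> real"
    and g :: "real \<Rightarrow> (nat \<Rightarrow> real) \<times> (nat \<Rightarrow> real) \<Rightarrow> real"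
  assumes "prob_space M"
    and "T \<in> M \<rightarrow>\<^sub>M vec_space m"
    and "T0 \<in> M \<rightarrow>\<^sub>M vec_space m"
    and "H0 \<subseteq> {1..m}"
    and "\<forall>i\<in>H0. cond_exch M m T T0 i"
    and "(\<lambda>(x, d). g x d) \<in> borel \<Otimes>\<^sub>M pair_vec_space m \<rightarrow>\<^sub>M borel"
    and "\<forall>J\<subseteq>{1..m}. \<forall>\<omega>\<in>space M. \<forall>x.
           g x (swap_coords J (T \<omega>, T0 \<omega>)) = g x (T \<omega>, T0 \<omega>)"
  shows "\<forall>i\<in>H0. cond_exch M m
           (\<lambda>\<omega>. restrict (\<lambda>k. g (T \<omega> k) (T \<omega>, T0 \<omega>)) {1..m})
           (\<lambda>\<omega>. restrict (\<lambda>k. g (T0 \<omega> k) (T \<omega>, T0 \<omega>)) {1..m}) i"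
proof
  fix i assume "i \<in> H0"
  then have "{i} \<subseteq> {1..m}"
    using assms(4) by auto
  then have "cond_exch M m (\<lambda>\<omega>. fst (score_map m g (T \<omega>, T0 \<omega>)))
      (\<lambda>\<omega>. snd (score_map m g (T \<omega>, T0 \<omega>))) i"
    using \<open>i \<in> H0\<close> assms(2,3,5-7)
    by (intro cond_exch_image measurable_pair_vec_space_Pair measurable_score_map
        score_map_swap_coords) auto
  then show "cond_exch M m
      (\<lambda>\<omega>. restrict (\<lambda>k. g (T \<omega> k) (T \<omega>, T0 \<omega>)) {1..m})
      (\<lambda>\<omega>. restrict (\<lambda>k. g (T0 \<omega> k) (T \<omega>, T0 \<omega>)) {1..m}) i"
    by (simp add: score_map_def)
qed

end
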